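(* Let $q$ be a prime power and $d\le n\le m$ integers, let $\tau=\lfloor (d-1)/2\rfloor+1$, and assume $d\le n-1$ when $d$ is odd. Then there exist a code $\mathcal C\subseteq\mathbb F_{q^m}^n$ with minimum rank distance at least $d$ and a word $\mathbf r\in\mathbb F_{q^m}^n$ such that $|\mathcal C\cap\mathcal B_\tau(\mathbf r)|\ge q^{n-\tau}$.
   Context: Fixing a basis of $\mathbb F_{q^m}$ over $\mathbb F_q$, each vector in $\mathbb F_{q^m}^n$ is identified with an $m\times n$ matrix over $\mathbb F_q$; $\mathrm{rk}$ denotes its rank. The minimum rank distance of $\mathcal C$ is $\min\{\mathrm{rk}(\mathbf c_1-\mathbf c_2):\mathbf c_1\ne\mathbf c_2\in\mathcal C\}$, and $\mathcal B_\tau(\mathbf r)=\{\mathbf x:\mathrm{rk}(\mathbf x-\mathbf r)\le\tau\}$. Codes need not be linear. *)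

theory Defs
  imports "Jordan_Normal_Form.DL_Rank"
begin

text \<open>Words of F_{q^m}^n are identified (via a fixed F_q-basis of F_{q^m}) with
  m x n matrices over F_q, i.e. elements of carrier_mat m n.\<close>

definition mat_rk :: "'a::field mat \<Rightarrow> nat" where
  "mat_rk A = vec_space.rank (dim_row A) A"

definition min_rank_dist_ge :: "'a::field mat set \<Rightarrow> nat \<Rightarrow> bool" where
  "min_rank_dist_ge C d \<longleftrightarrow> (\<forall>c1\<in>C. \<forall>c2\<in>C. c1 \<noteq> c2 \<longrightarrow> d \<le> mat_rk (c1 - c2))"

definition rank_ball :: "nat \<Rightarrow> nat \<Rightarrow> nat \<Rightarrow> 'a::field mat \<Rightarrow> 'a mat set" where
  "rank_ball m n \<tau> r = {x \<in> carrier_mat m n. mat_rk (x - r) \<le> \<tau>}"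

end

theory Submission
  imports Defs "HOL-Algebra.Algebraic_Closure_Type" "HOL-Number_Theory.Cong" "HOL-Library.Cardinality"
begin

text \<open>Put \<open>k = \<lfloor>(d - 1)/2\<rfloor> + 1\<close>, \<open>N = n - k\<close> and \<open>M = m - k\<close>, so that \<open>d \<le> 2k\<close> and
  \<open>k \<le> N \<le> M\<close>. The field with \<open>q\<^sup>N\<close> elements, realised inside the algebraic closure of \<open>\<bbbF>\<^sub>q\<close> as the
  roots of \<open>X ^ q\<^sup>N - X\<close>, yields through its multiplication matrices a spread set: \<open>q\<^sup>N\<close> matrices
  \<open>G\<close> of size \<open>N \<times> N\<close> over \<open>\<bbbF>\<^sub>q\<close> with pairwise invertible differences. To each such \<open>G\<close> we attach the word
  \<open>[Q, I; PQ, P] = [I; P] [Q, I]\<close>, where \<open>Q\<close> consists of the first \<open>k\<close> rows of \<open>G\<close> and \<open>P\<close> of its first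
  \<open>k\<close> columns padded with zero rows. These words have rank at most \<open>k\<close>, so they all lie in the ball of
  radius \<open>k\<close> around \<open>0\<close>. The difference of two words is block lower triangular with diagonal blocks
  \<open>Q - Q'\<close> and \<open>P - P'\<close>, which have full rank \<open>k\<close> because \<open>G - G'\<close> is invertible; hence the rank
  distance is at least \<open>2k \<ge> d\<close>.\<close>

lemma power_card_eq_self_if_mult_closed:
  fixes S :: "'a::field set"
  assumes fin: "finite S" and zero: "0 \<in> S" and mult: "\<And>x y. x \<in> S \<Longrightarrow> y \<in> S \<Longrightarrow> x * y \<in> S"
    and z: "z \<in> S"
  shows "z ^ card S = z"
proof (cases "z = 0")
  case True
  have "card S \<noteq> 0" using fin zero by auto
  with True show ?thesis by simp
next
  case False
  let ?S = "S - {0}"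
  have inj: "inj_on ((*) z) ?S" using False by (auto intro: inj_onI)
  have "(*) z ` ?S \<subseteq> ?S" using mult z False by auto
  hence onto: "(*) z ` ?S = ?S" using card_subset_eq[of ?S] card_image[OF inj] fin by auto
  have "z ^ card ?S * \<Prod>?S = (\<Prod>y\<in>?S. z * y)" by (simp add: prod.distrib)
  also have "\<dots> = \<Prod>((*) z ` ?S)" by (simp add: prod.reindex[OF inj])
  also have "\<dots> = \<Prod>?S" using onto by simp
  finally have "z ^ card ?S = 1" using fin by simp
  moreover have "card S = Suc (card ?S)" using fin zero by (metis card_Suc_Diff1)
  ultimately show ?thesis by simp
qed

lemma inverse_mem_if_mult_closed:
  fixes S :: "'a::field set"
  assumes fin: "finite S" and zero: "0 \<in> S" and one: "1 \<in> S"
    and mult: "\<And>x y. x \<in> S \<Longrightarrow> y \<in> S \<Longrightarrow> x * y \<in> S" and z: "z \<in> S"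
  shows "inverse z \<in> S"
proof (cases "z = 0")
  case False
  have "card {0, z} \<le> card S" using fin zero z by (intro card_mono) auto
  hence card2: "card S = Suc (Suc (card S - 2))" using False by simp
  have "z * z ^ (card S - 2) * z = z * 1"
    using power_card_eq_self_if_mult_closed[OF fin zero mult z] card2
    by (metis mult.commute mult_1 power_Suc)
  hence "inverse z = z ^ (card S - 2)" using False by (simp add: field_simps)
  moreover have "z ^ n \<in> S" for n by (induction n) (use one mult z in auto)
  ultimately show ?thesis by simp
qed (use zero in simp)

definition is_subfield :: "'a::field set \<Rightarrow> bool" where
  "is_subfield K \<longleftrightarrow> 1 \<in> K \<and> (\<forall>x\<in>K. \<forall>y\<in>K. x - y \<in> K \<and> x * y \<in> K) \<and> (\<forall>x\<in>K. inverse x \<in> K)"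

lemma
  assumes "is_subfield K"
  shows subfield_one: "1 \<in> K" and subfield_zero: "0 \<in> K"
    and subfield_diff: "x \<in> K \<Longrightarrow> y \<in> K \<Longrightarrow> x - y \<in> K"
    and subfield_add: "x \<in> K \<Longrightarrow> y \<in> K \<Longrightarrow> x + y \<in> K"
    and subfield_mult: "x \<in> K \<Longrightarrow> y \<in> K \<Longrightarrow> x * y \<in> K"
    and subfield_inverse: "x \<in> K \<Longrightarrow> inverse x \<in> K"
proof -
  note K = assms[unfolded is_subfield_def]
  show "1 \<in> K" using K by blast
  show zero: "0 \<in> K" using K by (metis diff_self)
  show diff: "x \<in> K \<Longrightarrow> y \<in> K \<Longrightarrow> x - y \<in> K" for x y using K by blast
  show "x \<in> K \<Longrightarrow> y \<in> K \<Longrightarrow> x + y \<in> K" using diff[of x "0 - y"] diff[OF zero, of y] by simp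
  show "x \<in> K \<Longrightarrow> y \<in> K \<Longrightarrow> x * y \<in> K" for x y using K by blast
  show "x \<in> K \<Longrightarrow> inverse x \<in> K" using K by blast
qed

definition kspan :: "'a::field set \<Rightarrow> (nat \<Rightarrow> 'a) \<Rightarrow> nat \<Rightarrow> 'a set" where
  "kspan K b j = {\<Sum>i<j. c i * b i | c. \<forall>i<j. c i \<in> K}"

text \<open>Linear independence of \<open>b 0, \<dots>, b (j - 1)\<close> over \<open>K\<close>, in the triangular form produced by
  greedy extension.\<close>
definition kindep :: "'a::field set \<Rightarrow> (nat \<Rightarrow> 'a) \<Rightarrow> nat \<Rightarrow> bool" where
  "kindep K b j \<longleftrightarrow> (\<forall>i<j. b i \<notin> kspan K b i)"

lemma kspan_memI: "\<forall>i<j. c i \<in> K \<Longrightarrow> (\<Sum>i<j. c i * b i) \<in> kspan K b j"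
  unfolding kspan_def by (rule CollectI, rule exI[of _ c]) simp

lemma kspan_cong: "(\<And>i. i < j \<Longrightarrow> b i = b' i) \<Longrightarrow> kspan K b j = kspan K b' j"
proof -
  assume "\<And>i. i < j \<Longrightarrow> b i = b' i"
  hence "(\<Sum>i<j. c i * b i) = (\<Sum>i<j. c i * b' i)" for c by (intro sum.cong) auto
  thus ?thesis unfolding kspan_def by simp
qed

lemma kspan_0: "kspan K b 0 = {0}"
  unfolding kspan_def by simp

lemma kspan_Suc: "kspan K b (Suc j) = (\<lambda>(s, a). s + a * b j) ` (kspan K b j \<times> K)"
proof (intro equalityI subsetI)
  fix z assume "z \<in> kspan K b (Suc j)"
  then obtain c where c: "\<forall>i<Suc j. c i \<in> K" "z = (\<Sum>i<Suc j. c i * b i)"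
    unfolding kspan_def by blast
  show "z \<in> (\<lambda>(s, a). s + a * b j) ` (kspan K b j \<times> K)"
  proof (rule image_eqI)
    show "z = (\<lambda>(s, a). s + a * b j) (\<Sum>i<j. c i * b i, c j)" using c(2) by simp
    show "(\<Sum>i<j. c i * b i, c j) \<in> kspan K b j \<times> K" using c(1) by (simp add: kspan_memI)
  qed
next
  fix z assume "z \<in> (\<lambda>(s, a). s + a * b j) ` (kspan K b j \<times> K)"
  then obtain s a where s: "s \<in> kspan K b j" and a: "a \<in> K" and z: "z = s + a * b j" by auto
  from s obtain c where c: "\<forall>i<j. c i \<in> K" "s = (\<Sum>i<j. c i * b i)"
    unfolding kspan_def by blast
  define c' where "c' = c(j := a)"
  have "(\<Sum>i<j. c i * b i) = (\<Sum>i<j. c' i * b i)" unfolding c'_def by (intro sum.cong) auto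
  hence "z = (\<Sum>i<Suc j. c' i * b i)" using c(2) z by (simp add: c'_def)
  moreover have "\<forall>i<Suc j. c' i \<in> K" using c(1) a by (simp add: c'_def less_Suc_eq)
  ultimately show "z \<in> kspan K b (Suc j)" using kspan_memI[of "Suc j" c' K b] by simp
qed

lemma kspan_subset:
  assumes "0 \<in> V" "\<And>x y. x \<in> V \<Longrightarrow> y \<in> V \<Longrightarrow> x + y \<in> V" "\<And>a x. a \<in> K \<Longrightarrow> x \<in> V \<Longrightarrow> a * x \<in> V"
    and "\<And>i. i < j \<Longrightarrow> b i \<in> V"
  shows "kspan K b j \<subseteq> V"
  using assms(4) by (induction j) (auto simp: kspan_0 kspan_Suc assms(1-3))

context
  fixes K :: "'a::field set"
  assumes K: "is_subfield K"
begin

lemma kspan_diff: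
  assumes "x \<in> kspan K b j" "y \<in> kspan K b j"
  shows "x - y \<in> kspan K b j"
proof -
  obtain c c' where "\<forall>i<j. c i \<in> K" "x = (\<Sum>i<j. c i * b i)" "\<forall>i<j. c' i \<in> K" "y = (\<Sum>i<j. c' i * b i)"
    using assms unfolding kspan_def by blast
  hence "x - y = (\<Sum>i<j. (c i - c' i) * b i)" "\<forall>i<j. c i - c' i \<in> K"
    by (simp_all add: sum_subtractf left_diff_distrib subfield_diff[OF K])
  thus ?thesis by (simp add: kspan_memI)
qed

lemma kspan_scale:
  assumes "a \<in> K" "x \<in> kspan K b j"
  shows "a * x \<in> kspan K b j"
proof -
  obtain c where "\<forall>i<j. c i \<in> K" "x = (\<Sum>i<j. c i * b i)"
    using assms(2) unfolding kspan_def by blast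
  hence "a * x = (\<Sum>i<j. (a * c i) * b i)" "\<forall>i<j. a * c i \<in> K"
    using assms(1) by (simp_all add: sum_distrib_left mult.assoc subfield_mult[OF K])
  thus ?thesis by (simp add: kspan_memI)
qed

lemma inj_on_kspan_Suc:
  assumes "b j \<notin> kspan K b j"
  shows "inj_on (\<lambda>(s, a). s + a * b j) (kspan K b j \<times> K)"
proof (rule inj_onI, clarify)
  fix s a s' a' assume s: "s \<in> kspan K b j" "s' \<in> kspan K b j" and a: "a \<in> K" "a' \<in> K"
    and eq: "s + a * b j = s' + a' * b j"
  have "a = a'"
  proof (rule ccontr)
    assume "a \<noteq> a'"
    hence "b j = inverse (a' - a) * (s - s')" using eq by (simp add: field_simps)
    moreover have "inverse (a' - a) \<in> K"
      using K a subfield_diff[OF K] unfolding is_subfield_def by blast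
    ultimately show False using assms kspan_scale kspan_diff[OF s] by metis
  qed
  with eq show "s = s' \<and> a = a'" by simp
qed

lemma card_kspan:
  assumes "kindep K b j"
  shows "card (kspan K b j) = card K ^ j"
  using assms
proof (induction j)
  case (Suc j)
  have indep: "kindep K b j" "b j \<notin> kspan K b j" using Suc.prems by (auto simp: kindep_def)
  have "card (kspan K b (Suc j)) = card (kspan K b j \<times> K)"
    unfolding kspan_Suc by (rule card_image[OF inj_on_kspan_Suc[OF indep(2)]])
  also have "\<dots> = card K ^ j * card K" using Suc.IH[OF indep(1)] by (simp add: card_cartesian_product)
  finally show ?case by (simp add: mult.commute)
qed (simp add: kspan_0)

lemma kspan_coeffs_unique:
  assumes "kindep K b j" "\<forall>i<j. c i \<in> K" "\<forall>i<j. c' i \<in> K"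
    and "(\<Sum>i<j. c i * b i) = (\<Sum>i<j. c' i * b i)"
  shows "\<forall>i<j. c i = c' i"
  using assms
proof (induction j)
  case (Suc j)
  have mem: "(\<Sum>i<j. c i * b i) \<in> kspan K b j" "(\<Sum>i<j. c' i * b i) \<in> kspan K b j"
    using Suc.prems(2,3) by (simp_all add: kspan_memI)
  have indep: "kindep K b j" "b j \<notin> kspan K b j" using Suc.prems(1) by (auto simp: kindep_def)
  have "(\<Sum>i<j. c i * b i, c j) = (\<Sum>i<j. c' i * b i, c' j)"
  proof (rule inj_onD[OF inj_on_kspan_Suc[OF indep(2)]])
    show "(\<lambda>(s, a). s + a * b j) (\<Sum>i<j. c i * b i, c j) = (\<lambda>(s, a). s + a * b j) (\<Sum>i<j. c' i * b i, c' j)"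
      using Suc.prems(4) by simp
  qed (use mem Suc.prems(2,3) in simp_all)
  hence sums: "(\<Sum>i<j. c i * b i) = (\<Sum>i<j. c' i * b i)" and last: "c j = c' j" by simp_all
  have "\<forall>i<j. c i = c' i" using Suc.prems(2,3) by (intro Suc.IH[OF indep(1) _ _ sums]) simp_all
  with last show ?case by (metis less_SucE)
qed simp

lemma exists_kspan_basis:
  assumes "finite K" "finite V" "0 \<in> V" "\<And>x y. x \<in> V \<Longrightarrow> y \<in> V \<Longrightarrow> x + y \<in> V"
    and "\<And>a x. a \<in> K \<Longrightarrow> x \<in> V \<Longrightarrow> a * x \<in> V"
  obtains b e where "kindep K b e" "kspan K b e = V"
proof -
  have "\<exists>b e. kindep K b e \<and> kspan K b e = V"
  proof (rule ccontr)
    assume none: "\<nexists>b e. kindep K b e \<and> kspan K b e = V"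
    have "\<exists>b. kindep K b j \<and> (\<forall>i<j. b i \<in> V)" for j
    proof (induction j)
      case (Suc j)
      then obtain b where b: "kindep K b j" "\<forall>i<j. b i \<in> V" by blast
      have "kspan K b j \<subseteq> V" using kspan_subset[of V K j b] b(2) assms(3-5) by blast
      moreover have "kspan K b j \<noteq> V" using none b(1) by blast
      ultimately obtain x where x: "x \<in> V" "x \<notin> kspan K b j" by blast
      define b' where "b' = b(j := x)"
      have b': "b' j = x" "\<And>i. i < j \<Longrightarrow> b' i = b i" unfolding b'_def by auto
      have "kspan K b' i = kspan K b i" if "i \<le> j" for i
        using that b'(2) by (intro kspan_cong) auto
      with b b' x have "kindep K b' (Suc j) \<and> (\<forall>i<Suc j. b' i \<in> V)"
        by (auto simp: kindep_def less_Suc_eq)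
      thus ?case by blast
    qed (simp add: kindep_def)
    then obtain b where b: "kindep K b (card V)" "\<forall>i<card V. b i \<in> V" by blast
    have "card {0, 1 :: 'a} \<le> card K" using assms(1) subfield_zero[OF K] subfield_one[OF K]
      by (intro card_mono) auto
    hence "2 ^ card V \<le> card K ^ card V" by (intro power_mono) auto
    hence "card V < card K ^ card V" using less_exp[of "card V"] by linarith
    also have "\<dots> = card (kspan K b (card V))" using card_kspan[OF b(1)] ..
    also have "\<dots> \<le> card V" using kspan_subset[of V K "card V" b] b(2) assms(2-5)
      by (intro card_mono) auto
    finally show False by simp
  qed
  thus ?thesis using that by blast
qed

end

lemma prime_CHAR_finite_field: "Factorial_Ring.prime CHAR('a::{finite,field})"
  using prime_CHAR_semidom[where 'a='a] finite_imp_CHAR_pos[where 'a='a] by simp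

lemma card_finite_field_ge_2: "2 \<le> card (UNIV :: 'a::{finite,field} set)"
  using card_mono[of "UNIV :: 'a set" "{0, 1}"] by simp

lemma power_card_eq_self: "(x :: 'a::{finite,field}) ^ CARD('a) = x"
  by (rule power_card_eq_self_if_mult_closed) simp_all

lemma power_card_power_eq_self: "(x :: 'a::{finite,field}) ^ (CARD('a) ^ N) = x"
  by (induction N) (simp_all add: power_mult power_card_eq_self)

lemma is_subfield_range_of_int: "is_subfield (range (of_int :: int \<Rightarrow> 'a::{finite,field}))"
proof -
  have zero: "0 \<in> range (of_int :: int \<Rightarrow> 'a)" and one: "1 \<in> range (of_int :: int \<Rightarrow> 'a)"
    by (metis of_int_0 rangeI, metis of_int_1 rangeI)
  have "inverse x \<in> range (of_int :: int \<Rightarrow> 'a)" if "x \<in> range of_int" for x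
    by (rule inverse_mem_if_mult_closed[OF _ zero one _ that]) (auto simp flip: of_int_mult)
  with one show ?thesis unfolding is_subfield_def by (auto simp flip: of_int_mult of_int_diff)
qed

lemma card_range_of_int: "card (range (of_int :: int \<Rightarrow> 'a::{finite,field})) = CHAR('a)"
proof -
  let ?p = "int CHAR('a)"
  have p: "?p > 0" using finite_imp_CHAR_pos[where 'a='a] by simp
  have "range (of_int :: int \<Rightarrow> 'a) = of_int ` {0..<?p}"
  proof (intro equalityI subsetI)
    fix x :: 'a assume "x \<in> range of_int"
    then obtain i where "x = of_int i" by blast
    moreover have "(of_int i :: 'a) = of_int (i mod ?p)"
      by (simp add: of_int_eq_iff_cong_CHAR cong_def)
    moreover have "i mod ?p \<in> {0..<?p}" using p by simp
    ultimately show "x \<in> of_int ` {0..<?p}" by blast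
  qed auto
  moreover have "inj_on (of_int :: int \<Rightarrow> 'a) {0..<?p}"
    by (rule inj_onI) (simp add: of_int_eq_iff_cong_CHAR cong_def)
  ultimately show ?thesis by (simp add: card_image)
qed

text \<open>The field is a vector space over its prime subfield.\<close>
lemma card_finite_field_eq_CHAR_power: "\<exists>e. card (UNIV :: 'a::{finite,field} set) = CHAR('a) ^ e"
proof -
  obtain b e where "kindep (range (of_int :: int \<Rightarrow> 'a)) b e" "kspan (range of_int) b e = UNIV"
    by (rule exists_kspan_basis[OF is_subfield_range_of_int, of UNIV]) simp_all
  thus ?thesis using card_kspan[OF is_subfield_range_of_int] card_range_of_int by metis
qed

lemma power_card_power_add:
  fixes x y :: "'a::{finite,field} alg_closure"
  shows "(x + y) ^ (CARD('a) ^ N) = x ^ (CARD('a) ^ N) + y ^ (CARD('a) ^ N)"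
proof -
  obtain e where "CARD('a) = CHAR('a) ^ e" using card_finite_field_eq_CHAR_power by blast
  hence "CARD('a) ^ N = CHAR('a alg_closure) ^ (e * N)" by (simp add: power_mult)
  from freshmans_dream'[OF _ this] show ?thesis by (simp add: prime_CHAR_finite_field)
qed

lemma card_roots_eq_degree:
  fixes p :: "'a::alg_closed_field poly"
  assumes "p \<noteq> 0" and "\<And>x. poly p x = 0 \<Longrightarrow> poly (pderiv p) x \<noteq> 0"
  shows "card {x. poly p x = 0} = Polynomial.degree p"
  using assms
proof (induction "Polynomial.degree p" arbitrary: p)
  case 0
  then obtain c where "p = [:c:]" "c \<noteq> 0" by (metis degree_eq_zeroE pCons_0_0)
  thus ?case by simp
next
  case (Suc n)
  then obtain x where x: "poly p x = 0" using alg_closed_imp_poly_has_root by force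
  then obtain q where p: "p = [:-x, 1:] * q" using poly_eq_0_iff_dvd by blast
  have "q \<noteq> 0" using Suc.prems(1) p by auto
  have "Polynomial.degree p = Polynomial.degree [:-x, 1:] + Polynomial.degree q"
    unfolding p using \<open>q \<noteq> 0\<close> by (intro degree_mult_eq) auto
  hence deg: "Polynomial.degree q = n" using Suc.hyps(2) by simp
  have "pderiv p = [:-x, 1:] * pderiv q + q"
    unfolding p pderiv_mult by (simp add: pderiv_pCons)
  hence deriv: "poly (pderiv p) y = poly q y + (y - x) * poly (pderiv q) y" for y
    unfolding \<open>pderiv p = _\<close> by (simp add: algebra_simps)
  have qx: "poly q x \<noteq> 0" using Suc.prems(2)[OF x] deriv[of x] by simp
  have "card {y. poly q y = 0} = Polynomial.degree q"
  proof (rule Suc.hyps(1)[OF deg[symmetric] \<open>q \<noteq> 0\<close>])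
    fix y assume "poly q y = 0"
    thus "poly (pderiv q) y \<noteq> 0" using Suc.prems(2)[of y] deriv[of y] by (simp add: p)
  qed
  moreover have "{y. poly p y = 0} = insert x {y. poly q y = 0}" by (auto simp: p)
  ultimately show ?case
    using qx poly_roots_finite[OF \<open>q \<noteq> 0\<close>] Suc.hyps(2) deg by simp
qed

definition gf :: "nat \<Rightarrow> 'a::{finite,field} alg_closure set" where
  "gf N = {z. z ^ (CARD('a) ^ N) = z}"

lemma is_subfield_gf: "is_subfield (gf N :: 'a::{finite,field} alg_closure set)"
proof -
  have "(x - y) ^ (CARD('a) ^ N) = x ^ (CARD('a) ^ N) - y ^ (CARD('a) ^ N)" for x y :: "'a alg_closure"
    using power_card_power_add[of "x - y" y N] by (simp add: algebra_simps)
  thus ?thesis unfolding is_subfield_def gf_def by (simp add: power_mult_distrib power_inverse)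
qed

lemma to_ac_in_gf: "to_ac x \<in> gf N"
  unfolding gf_def by (simp flip: to_ac_power add: power_card_power_eq_self)

lemma card_gf:
  assumes "N \<ge> 1"
  shows "card (gf N :: 'a::{finite,field} alg_closure set) = CARD('a) ^ N"
proof -
  let ?Q = "CARD('a) ^ N"
  define p :: "'a alg_closure poly" where "p = Polynomial.monom 1 ?Q - Polynomial.monom 1 1"
  have Q: "?Q \<ge> 2" using card_finite_field_ge_2[where 'a='a] assms
    by (metis le_trans power_increasing power_one_right one_le_numeral)
  have roots: "gf N = {x. poly p x = 0}" unfolding gf_def p_def by (simp add: poly_monom)
  have "Polynomial.degree p = Polynomial.degree (Polynomial.monom (1 :: 'a alg_closure) ?Q)"
    unfolding p_def diff_conv_add_uminus using Q by (intro degree_add_eq_left) (simp add: degree_monom_eq)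
  hence deg: "Polynomial.degree p = ?Q" by (simp add: degree_monom_eq)
  hence "p \<noteq> 0" using Q by auto
  obtain e where e: "CARD('a) = CHAR('a) ^ e" using card_finite_field_eq_CHAR_power by blast
  with card_finite_field_ge_2[where 'a='a] have "e \<noteq> 0" by (cases e) auto
  hence "CHAR('a alg_closure) dvd ?Q" using e assms by (simp add: dvd_power power_mult[symmetric])
  hence "(of_nat ?Q :: 'a alg_closure) = 0" by (simp only: of_nat_eq_0_iff_char_dvd)
  hence "poly (pderiv p) x = -1" for x unfolding p_def by (simp add: pderiv_diff pderiv_monom poly_monom)
  thus ?thesis using card_roots_eq_degree[OF \<open>p \<noteq> 0\<close>] roots deg by simp
qed

lemma is_subfield_range_to_ac: "is_subfield (range (to_ac :: 'a::field \<Rightarrow> 'a alg_closure))"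
  unfolding is_subfield_def by (auto simp flip: to_ac_diff to_ac_mult to_ac_inverse)

lemma exists_gf_basis:
  assumes "N \<ge> 1"
  obtains b :: "nat \<Rightarrow> 'a::{finite,field} alg_closure"
  where "kindep (range to_ac) b N" "kspan (range to_ac) b N = gf N"
proof -
  have cardK: "card (range (to_ac :: 'a \<Rightarrow> 'a alg_closure)) = CARD('a)"
    using card_image[OF inj_to_ac] by simp
  have cardV: "card (gf N :: 'a alg_closure set) = CARD('a) ^ N" by (rule card_gf[OF assms])
  hence finV: "finite (gf N :: 'a alg_closure set)"
    using card_finite_field_ge_2[where 'a='a] by (intro card_ge_0_finite) simp
  have zero: "0 \<in> gf N" by (rule subfield_zero[OF is_subfield_gf])
  have add: "x + y \<in> gf N" if "x \<in> gf N" "y \<in> gf N" for x y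
    using subfield_add[OF is_subfield_gf that] .
  have scale: "a * x \<in> gf N" if "a \<in> range to_ac" "x \<in> gf N" for a x
    using subfield_mult[OF is_subfield_gf _ that(2)] that(1) to_ac_in_gf by blast
  have "\<exists>b e. kindep (range to_ac) b e \<and> kspan (range to_ac) b e = (gf N :: 'a alg_closure set)"
    by (rule exists_kspan_basis[OF is_subfield_range_to_ac _ finV zero]) (auto intro: add scale)
  then obtain b :: "nat \<Rightarrow> 'a alg_closure" and e
    where b: "kindep (range to_ac) b e" "kspan (range to_ac) b e = gf N" by blast
  have "CARD('a) ^ e = CARD('a) ^ N" using card_kspan[OF is_subfield_range_to_ac b(1)] b(2) cardK cardV by simp
  hence "e = N" using card_finite_field_ge_2[where 'a='a] by (simp add: power_inject_exp)
  thus ?thesis using that b by simp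
qed

locale gf_basis =
  fixes N :: nat and b :: "nat \<Rightarrow> 'a::{finite,field} alg_closure"
  assumes indep: "kindep (range to_ac) b N" and span: "kspan (range to_ac) b N = gf N"
begin

definition coord :: "'a alg_closure \<Rightarrow> nat \<Rightarrow> 'a" where
  "coord z = (SOME c. (\<Sum>i<N. to_ac (c i) * b i) = z)"

lemma coord_sum:
  assumes "z \<in> gf N"
  shows "(\<Sum>i<N. to_ac (coord z i) * b i) = z"
proof -
  have "z \<in> kspan (range to_ac) b N" using assms span by simp
  then obtain c where c: "\<forall>i<N. c i \<in> range to_ac" "z = (\<Sum>i<N. c i * b i)"
    unfolding kspan_def by blast
  hence "(\<Sum>i<N. to_ac (of_ac (c i)) * b i) = z" by (simp add: to_ac_of_ac)
  thus ?thesis unfolding coord_def by (rule someI[where x = "\<lambda>i. of_ac (c i)"])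
qed

lemma coord_unique:
  assumes "(\<Sum>i<N. to_ac (c i) * b i) = z" and "i < N"
  shows "coord z i = c i"
proof -
  have "(\<Sum>i<N. to_ac (c i) * b i) \<in> kspan (range to_ac) b N" by (rule kspan_memI) simp
  hence "z \<in> gf N" using assms(1) span by simp
  hence "(\<Sum>i<N. to_ac (coord z i) * b i) = (\<Sum>i<N. to_ac (c i) * b i)"
    using coord_sum assms(1) by simp
  with kspan_coeffs_unique[OF is_subfield_range_to_ac indep, of "\<lambda>i. to_ac (coord z i)" "\<lambda>i. to_ac (c i)"]
  show ?thesis using assms(2) by simp
qed

definition mult_mat :: "'a alg_closure \<Rightarrow> 'a mat" where
  "mult_mat z = mat N N (\<lambda>(i, j). coord (z * b j) i)"

lemma mult_mat_carrier [simp]: "mult_mat z \<in> carrier_mat N N"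
  unfolding mult_mat_def by simp

lemma dim_mult_mat [simp]: "dim_row (mult_mat z) = N" "dim_col (mult_mat z) = N"
  unfolding mult_mat_def by simp_all

lemma basis_in_gf:
  assumes "j < N"
  shows "b j \<in> gf N"
proof -
  have "(\<Sum>i<N. (if i = j then 1 else 0) * b i) = b j"
    using assms by (simp add: if_distrib[of "\<lambda>x. x * _"] cong: if_cong)
  moreover have "\<forall>i<N. (if i = j then 1 else 0) \<in> range to_ac"
    using subfield_zero[OF is_subfield_range_to_ac] subfield_one[OF is_subfield_range_to_ac] by simp
  ultimately show ?thesis using span kspan_memI[of N "\<lambda>i. if i = j then 1 else 0" "range to_ac" b] by simp
qed

lemma mult_gf: "z \<in> gf N \<Longrightarrow> j < N \<Longrightarrow> z * b j \<in> gf N"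
  using subfield_mult[OF is_subfield_gf] basis_in_gf by blast

lemma mult_mat_diff:
  assumes "z \<in> gf N" "w \<in> gf N"
  shows "mult_mat z - mult_mat w = mult_mat (z - w)"
proof (rule eq_matI)
  fix i j assume "i < dim_row (mult_mat (z - w))" "j < dim_col (mult_mat (z - w))"
  hence ij: "i < N" "j < N" unfolding mult_mat_def by auto
  have "(\<Sum>l<N. to_ac (coord (z * b j) l - coord (w * b j) l) * b l) = (z - w) * b j"
    using coord_sum[OF mult_gf[OF assms(1) ij(2)]] coord_sum[OF mult_gf[OF assms(2) ij(2)]]
    by (simp add: left_diff_distrib sum_subtractf)
  from coord_unique[OF this ij(1)]
  show "(mult_mat z - mult_mat w) $$ (i, j) = mult_mat (z - w) $$ (i, j)"
    using ij by (simp add: mult_mat_def)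
qed (simp_all add: mult_mat_def)

lemma mult_mat_mult:
  assumes z: "z \<in> gf N" and w: "w \<in> gf N"
  shows "mult_mat z * mult_mat w = mult_mat (z * w)"
proof (rule eq_matI)
  fix i j assume "i < dim_row (mult_mat (z * w))" "j < dim_col (mult_mat (z * w))"
  hence ij: "i < N" "j < N" unfolding mult_mat_def by auto
  define c where "c = coord (w * b j)"
  have "(\<Sum>k<N. to_ac (\<Sum>l<N. coord (z * b l) k * c l) * b k)
      = (\<Sum>k<N. \<Sum>l<N. to_ac (c l) * (to_ac (coord (z * b l) k) * b k))"
    by (simp only: to_ac_sum to_ac_mult sum_distrib_right) (simp only: mult_ac)
  also have "\<dots> = (\<Sum>l<N. \<Sum>k<N. to_ac (c l) * (to_ac (coord (z * b l) k) * b k))"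
    by (rule sum.swap)
  also have "\<dots> = (\<Sum>l<N. to_ac (c l) * (\<Sum>k<N. to_ac (coord (z * b l) k) * b k))"
    by (simp only: sum_distrib_left)
  also have "\<dots> = (\<Sum>l<N. to_ac (c l) * (z * b l))"
    using coord_sum[OF mult_gf[OF z]] by simp
  also have "\<dots> = z * (\<Sum>l<N. to_ac (c l) * b l)"
    by (simp add: sum_distrib_left mult.left_commute)
  also have "\<dots> = z * (w * b j)" using coord_sum[OF mult_gf[OF w ij(2)]] by (simp add: c_def)
  finally have "coord (z * w * b j) i = (\<Sum>l<N. coord (z * b l) i * c l)"
    using coord_unique ij(1) by (simp add: mult.assoc)
  thus "(mult_mat z * mult_mat w) $$ (i, j) = mult_mat (z * w) $$ (i, j)"
    using ij by (simp add: mult_mat_def c_def scalar_prod_def lessThan_atLeast0)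
qed (simp_all add: mult_mat_def)

lemma mult_mat_one: "mult_mat 1 = 1\<^sub>m N"
proof (rule eq_matI)
  fix i j assume "i < dim_row (1\<^sub>m N :: 'a mat)" "j < dim_col (1\<^sub>m N :: 'a mat)"
  hence ij: "i < N" "j < N" by auto
  have "(\<Sum>l<N. to_ac (if l = j then 1 else 0) * b l) = (\<Sum>l<N. if l = j then b l else 0)"
    by (intro sum.cong) auto
  also have "\<dots> = b j" using ij(2) by simp
  finally have "(\<Sum>l<N. to_ac (if l = j then 1 else 0) * b l) = b j" .
  from coord_unique[OF this ij(1)] show "mult_mat 1 $$ (i, j) = 1\<^sub>m N $$ (i, j)"
    using ij by (simp add: mult_mat_def)
qed (simp_all add: mult_mat_def)

lemma mult_mat_inverse:
  assumes "z \<in> gf N" "z \<noteq> 0"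
  shows "mult_mat z * mult_mat (inverse z) = 1\<^sub>m N" "mult_mat (inverse z) * mult_mat z = 1\<^sub>m N"
  using mult_mat_mult[OF assms(1) subfield_inverse[OF is_subfield_gf assms(1)]]
    mult_mat_mult[OF subfield_inverse[OF is_subfield_gf assms(1)] assms(1)] assms(2)
  by (simp_all add: mult_mat_one)

lemma inj_on_mult_mat:
  assumes "N \<ge> 1"
  shows "inj_on mult_mat (gf N)"
proof (rule inj_onI)
  fix z w assume zw: "z \<in> gf N" "w \<in> gf N" "mult_mat z = mult_mat w"
  have "coord (z * b 0) i = coord (w * b 0) i" if "i < N" for i
    using arg_cong[OF zw(3), of "\<lambda>A. A $$ (i, 0)"] that assms by (simp add: mult_mat_def)
  hence "(\<Sum>i<N. to_ac (coord (z * b 0) i) * b i) = (\<Sum>i<N. to_ac (coord (w * b 0) i) * b i)"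
    by (intro sum.cong) auto
  hence "z * b 0 = w * b 0"
    using coord_sum[OF mult_gf[OF zw(1)]] coord_sum[OF mult_gf[OF zw(2)]] assms by simp
  moreover have "b 0 \<noteq> 0" using indep assms by (auto simp: kindep_def kspan_0)
  ultimately show "z = w" by simp
qed

end

lemma exists_spread_set:
  assumes "N \<ge> 1"
  shows "\<exists>S \<subseteq> carrier_mat N N. card S = card (UNIV :: 'a::{finite,field} set) ^ N \<and>
           (\<forall>A\<in>S. \<forall>B\<in>S. A \<noteq> B \<longrightarrow>
              (\<exists>H \<in> carrier_mat N N. (A - B) * H = 1\<^sub>m N \<and> H * (A - B :: 'a mat) = 1\<^sub>m N))"
proof -
  obtain b :: "nat \<Rightarrow> 'a alg_closure" where "kindep (range to_ac) b N" "kspan (range to_ac) b N = gf N"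
    using exists_gf_basis[OF assms] by blast
  then interpret gf_basis N b by unfold_locales
  have "\<exists>H \<in> carrier_mat N N. (A - B) * H = 1\<^sub>m N \<and> H * (A - B) = 1\<^sub>m N"
    if AB: "A \<in> mult_mat ` gf N" "B \<in> mult_mat ` gf N" "A \<noteq> B" for A B
  proof -
    obtain z w where zw: "z \<in> gf N" "w \<in> gf N" "A = mult_mat z" "B = mult_mat w"
      using AB(1,2) by blast
    hence "z - w \<noteq> 0" using AB(3) by auto
    from mult_mat_inverse[OF subfield_diff[OF is_subfield_gf zw(1,2)] this]
    show ?thesis using zw mult_mat_diff by (intro bexI[of _ "mult_mat (inverse (z - w))"]) simp_all
  qed
  moreover have "card (mult_mat ` gf N) = card (UNIV :: 'a set) ^ N"
    using card_image[OF inj_on_mult_mat[OF assms]] card_gf[OF assms] by simp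
  ultimately show ?thesis by (intro exI[of _ "mult_mat ` gf N"]) auto
qed

lemma (in vec_space) mult_in_span:
  assumes A: "A \<in> carrier_mat n nc" and v: "v \<in> carrier_vec nc"
  shows "A *\<^sub>v v \<in> span (set (cols A))"
proof -
  have cd: "set (cols A) \<subseteq> carrier_vec n" using A cols_dim by blast
  have "lincomb_list (\<lambda>i. v $ i) (cols A) = mat_of_cols n (cols A) *\<^sub>v vec (length (cols A)) (\<lambda>i. v $ i)"
    by (rule lincomb_list_as_mat_mult) (use cd in auto)
  also have "mat_of_cols n (cols A) = A" using A mat_of_cols_cols[of A] by simp
  also have "vec (length (cols A)) (\<lambda>i. v $ i) = v" using A v by (intro eq_vecI) auto
  finally have e: "A *\<^sub>v v = lincomb_list (\<lambda>i. v $ i) (cols A)" by simp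
  have "A *\<^sub>v v \<in> span_list (cols A)" unfolding e span_list_def by auto
  thus ?thesis using span_list_as_span[OF cd] by simp
qed

lemma (in vec_space) rank_mult_le:
  assumes A: "A \<in> carrier_mat n nc" and B: "B \<in> carrier_mat nc k"
  shows "rank (A * B) \<le> rank A"
proof -
  let ?S = "set (cols A)" and ?T = "set (cols (A * B))"
  have AB: "A * B \<in> carrier_mat n k" using A B by simp
  have Sc: "?S \<subseteq> carrier_vec n" using A cols_dim by blast
  have Tsub: "?T \<subseteq> span ?S"
  proof
    fix x assume "x \<in> ?T"
    then obtain j where j: "j < k" "x = col (A * B) j" using AB
      by (metis carrier_matD(2) cols_length cols_nth in_set_conv_nth)
    have "x = A *\<^sub>v col B j" by (simp only: j(2) col_mult2[OF A B j(1)])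
    thus "x \<in> span ?S" using mult_in_span[OF A] B j by simp
  qed
  have vs: "vectorspace class_ring (vs (span ?S))" using span_is_subspace[THEN subspace_is_vs, of ?S] Sc by auto
  have sm: "submodule class_ring (span ?S) V" using Sc by (simp add: span_is_submodule)
  have sub: "VectorSpace.subspace class_ring (span ?T) (vs (span ?S))"
    using vectorspace.span_is_subspace[OF vs, of ?T, unfolded span_li_not_depend(1)[OF Tsub sm]]
      Tsub by auto
  have fin: "vectorspace.fin_dim class_ring (vs (span ?S))"
      "vectorspace.fin_dim class_ring (vs (span ?S)\<lparr>carrier := span ?T\<rparr>)"
    using fin_dim_span_cols A AB by auto
  show ?thesis unfolding rank_def using vectorspace.subspace_dim[OF vs sub fin(1) fin(2)] by simp
qed

lemma (in vec_space) rank_left_invertible: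
  assumes A: "A \<in> carrier_mat n nc" and L: "L \<in> carrier_mat nc n" and LA: "L * A = 1\<^sub>m nc"
  shows "rank A = nc"
proof -
  have dist: "distinct (cols A)"
  proof (rule ccontr)
    assume "\<not> distinct (cols A)"
    then obtain i j where ij: "i \<noteq> j" "cols A ! i = cols A ! j" "i < length (cols A)" "j < length (cols A)"
      using distinct_conv_nth by blast
    hence c: "col A i = col A j" "i < nc" "j < nc" using A by auto
    have "col (L * A) i = col (L * A) j" using c A L by simp
    hence "col (1\<^sub>m nc) i = (col (1\<^sub>m nc) j :: 'a vec)" using LA by simp
    hence "(col (1\<^sub>m nc) i :: 'a vec) $ i = col (1\<^sub>m nc) j $ i" by simp
    thus False using c ij(1) by simp
  qed
  have "lin_indpt (set (cols A))"
  proof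
    assume "lin_dep (set (cols A))"
    then obtain v where v: "v \<in> carrier_vec nc" "v \<noteq> 0\<^sub>v nc" "A *\<^sub>v v = 0\<^sub>v n"
      using lin_depE[OF A _ dist] by blast
    have "v = (L * A) *\<^sub>v v" using LA v by simp
    also have "\<dots> = L *\<^sub>v (A *\<^sub>v v)" using A L v by (simp add: assoc_mult_mat_vec)
    also have "\<dots> = 0\<^sub>v nc" using v L by (intro eq_vecI) auto
    finally show False using v by simp
  qed
  thus ?thesis using lin_indpt_full_rank[OF A dist] by simp
qed

lemma mat_rk_ge_if_sandwich_one:
  fixes D :: "'a::field mat"
  assumes D: "D \<in> carrier_mat m n" and R: "R \<in> carrier_mat n r" and L: "L \<in> carrier_mat r m"
    and LDR: "L * (D * R) = 1\<^sub>m r"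
  shows "r \<le> mat_rk D"
proof -
  have DR: "D * R \<in> carrier_mat m r" using D R by simp
  have "vec_space.rank m (D * R) = r" by (rule vec_space.rank_left_invertible[OF DR L LDR])
  moreover have "vec_space.rank m (D * R) \<le> vec_space.rank m D" by (rule vec_space.rank_mult_le[OF D R])
  ultimately show ?thesis unfolding mat_rk_def using D by simp
qed

lemma mat_rk_mult_le_inner_dim:
  fixes A :: "'a::field mat"
  assumes A: "A \<in> carrier_mat m k" and B: "B \<in> carrier_mat k n"
  shows "mat_rk (A * B) \<le> k"
proof -
  have "vec_space.rank m (A * B) \<le> vec_space.rank m A" by (rule vec_space.rank_mult_le[OF A B])
  also have "\<dots> \<le> k" by (rule vec_space.rank_le_nc[OF A])
  finally show ?thesis unfolding mat_rk_def using A B by simp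
qed

lemma mat_rk_zero [simp]: "mat_rk (0\<^sub>m n nc :: 'a::field mat) = 0"
  unfolding mat_rk_def using vec_space.rank_0I by simp

lemma mat_rk_four_block_lower_ge:
  fixes A :: "'a::field mat"
  assumes A: "A \<in> carrier_mat k n" and B: "B \<in> carrier_mat m l" and C: "C \<in> carrier_mat m n"
    and W: "W \<in> carrier_mat n k" and V: "V \<in> carrier_mat l m"
    and AW: "A * W = 1\<^sub>m k" and VB: "V * B = 1\<^sub>m l"
  shows "k + l \<le> mat_rk (four_block_mat A (0\<^sub>m k l) C B)"
proof (rule mat_rk_ge_if_sandwich_one)
  let ?D = "four_block_mat A (0\<^sub>m k l) C B"
  let ?R = "four_block_mat W (0\<^sub>m n l) (0\<^sub>m l k) (1\<^sub>m l)"
  let ?L = "four_block_mat (1\<^sub>m k) (0\<^sub>m k m) (- (V * (C * W))) V"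
  have CW: "C * W \<in> carrier_mat m k" using C W by simp
  have "?D * ?R = four_block_mat (A * W + 0\<^sub>m k l * 0\<^sub>m l k) (A * 0\<^sub>m n l + 0\<^sub>m k l * 1\<^sub>m l)
      (C * W + B * 0\<^sub>m l k) (C * 0\<^sub>m n l + B * 1\<^sub>m l)"
    by (rule mult_four_block_mat) (use A B C W in auto)
  also have "\<dots> = four_block_mat (1\<^sub>m k) (0\<^sub>m k l) (C * W) B"
    using A B C CW AW by simp
  finally have DR: "?D * ?R = four_block_mat (1\<^sub>m k) (0\<^sub>m k l) (C * W) B" .
  have "?L * (?D * ?R) = four_block_mat (1\<^sub>m k * 1\<^sub>m k + 0\<^sub>m k m * (C * W))
      (1\<^sub>m k * 0\<^sub>m k l + 0\<^sub>m k m * B)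
      (- (V * (C * W)) * 1\<^sub>m k + V * (C * W)) (- (V * (C * W)) * 0\<^sub>m k l + V * B)"
    unfolding DR by (rule mult_four_block_mat) (use B V CW in auto)
  also have "\<dots> = four_block_mat (1\<^sub>m k) (0\<^sub>m k l) (0\<^sub>m l k) (1\<^sub>m l)"
  proof -
    have VCW: "- (V * (C * W)) \<in> carrier_mat l k" using V CW by simp
    have "- (V * (C * W)) * 1\<^sub>m k + V * (C * W) = 0\<^sub>m l k"
      using right_mult_one_mat[OF VCW] V CW by (simp add: uminus_l_inv_mat)
    moreover have "- (V * (C * W)) * 0\<^sub>m k l = 0\<^sub>m l l" by (rule right_mult_zero_mat[OF VCW])
    ultimately show ?thesis using B V CW VB by (simp add: left_mult_zero_mat[OF CW])
  qed
  also have "\<dots> = 1\<^sub>m (k + l)" by simp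
  finally show "?L * (?D * ?R) = 1\<^sub>m (k + l)" .
qed (use A B C W V in auto)

definition crop :: "nat \<Rightarrow> nat \<Rightarrow> 'a::zero mat \<Rightarrow> 'a mat" where
  "crop r c A = mat r c (\<lambda>(i, j). if i < dim_row A \<and> j < dim_col A then A $$ (i, j) else 0)"

lemma crop_carrier [simp]: "crop r c A \<in> carrier_mat r c"
  unfolding crop_def by simp

lemma dim_crop [simp]: "dim_row (crop r c A) = r" "dim_col (crop r c A) = c"
  unfolding crop_def by simp_all

lemma crop_diff:
  assumes "A \<in> carrier_mat n m" "B \<in> carrier_mat n m"
  shows "crop r c (A - B) = crop r c A - crop r c (B :: 'a::ab_group_add mat)"
  using assms by (intro eq_matI) (auto simp: crop_def)

lemma crop_one: "k \<le> n \<Longrightarrow> crop k k (1\<^sub>m n) = (1\<^sub>m k :: 'a::{zero,one} mat)"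
  by (intro eq_matI) (auto simp: crop_def)

lemma crop_mult_crop:
  fixes A B :: "'a::semiring_0 mat"
  assumes A: "A \<in> carrier_mat n p" and B: "B \<in> carrier_mat p m"
    and "r \<le> n" "c \<le> m" "p \<le> s"
  shows "crop r s A * crop s c B = crop r c (A * B)"
proof (rule eq_matI)
  fix i j assume "i < dim_row (crop r c (A * B))" "j < dim_col (crop r c (A * B))"
  hence ij: "i < r" "j < c" by (simp_all add: crop_def)
  have "(crop r s A * crop s c B) $$ (i, j)
      = (\<Sum>l\<in>{0..<s}. (if l < p then A $$ (i, l) else 0) * (if l < p then B $$ (l, j) else 0))"
    using A B ij assms(3-5) by (simp add: crop_def scalar_prod_def)
  also have "\<dots> = (\<Sum>l\<in>{0..<p}. A $$ (i, l) * B $$ (l, j))"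
    using assms(5) by (intro sum.mono_neutral_cong_right) auto
  also have "\<dots> = crop r c (A * B) $$ (i, j)"
    using A B ij assms(3,4) by (simp add: crop_def scalar_prod_def)
  finally show "(crop r s A * crop s c B) $$ (i, j) = crop r c (A * B) $$ (i, j)" .
qed (simp_all add: crop_def)

lemma four_block_mat_diff:
  assumes "A \<in> carrier_mat nr1 nc1" "B \<in> carrier_mat nr1 nc2" "C \<in> carrier_mat nr2 nc1"
    "D \<in> carrier_mat nr2 nc2" "A' \<in> carrier_mat nr1 nc1" "B' \<in> carrier_mat nr1 nc2"
    "C' \<in> carrier_mat nr2 nc1" "D' \<in> carrier_mat nr2 nc2"
  shows "four_block_mat A B C D - four_block_mat A' B' C' D'
    = four_block_mat (A - A') (B - B') (C - C') (D - D' :: 'a::ab_group_add mat)"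
  by (rule eq_matI) (use assms in auto)

definition code_word :: "nat \<Rightarrow> nat \<Rightarrow> nat \<Rightarrow> 'a::ring_1 mat \<Rightarrow> 'a mat" where
  "code_word k M N G = four_block_mat (crop k N G) (1\<^sub>m k) (crop M k G * crop k N G) (crop M k G)"

lemma code_word_carrier: "code_word k M N G \<in> carrier_mat (k + M) (N + k)"
  unfolding code_word_def by (rule four_block_carrier_mat) auto

lemma mat_rk_code_word_le: "mat_rk (code_word k M N (G :: 'a::field mat)) \<le> k"
proof -
  let ?Q = "crop k N G" and ?P = "crop M k G"
  have "four_block_mat (1\<^sub>m k) (0\<^sub>m k 0) ?P (0\<^sub>m M 0) * four_block_mat ?Q (1\<^sub>m k) (0\<^sub>m 0 N) (0\<^sub>m 0 k)
      = four_block_mat (1\<^sub>m k * ?Q + 0\<^sub>m k 0 * 0\<^sub>m 0 N) (1\<^sub>m k * 1\<^sub>m k + 0\<^sub>m k 0 * 0\<^sub>m 0 k)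
          (?P * ?Q + 0\<^sub>m M 0 * 0\<^sub>m 0 N) (?P * 1\<^sub>m k + 0\<^sub>m M 0 * 0\<^sub>m 0 k)"
    by (rule mult_four_block_mat) auto
  also have "\<dots> = code_word k M N G"
  proof -
    have "?P * ?Q \<in> carrier_mat M N" by (rule mult_carrier_mat[OF crop_carrier crop_carrier])
    thus ?thesis unfolding code_word_def by (simp add: left_mult_one_mat right_mult_one_mat)
  qed
  finally have "four_block_mat (1\<^sub>m k) (0\<^sub>m k 0) ?P (0\<^sub>m M 0) * four_block_mat ?Q (1\<^sub>m k) (0\<^sub>m 0 N) (0\<^sub>m 0 k)
    = code_word k M N G" .
  moreover have "four_block_mat (1\<^sub>m k) (0\<^sub>m k 0) ?P (0\<^sub>m M 0) \<in> carrier_mat (k + M) (k + 0)"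
    and "four_block_mat ?Q (1\<^sub>m k) (0\<^sub>m 0 N) (0\<^sub>m 0 k) \<in> carrier_mat (k + 0) (N + k)"
    by (rule four_block_carrier_mat; simp)+
  ultimately show ?thesis using mat_rk_mult_le_inner_dim by (metis add_0_right)
qed

lemma mat_rk_code_word_diff_ge:
  fixes G G' :: "'a::field mat"
  assumes G: "G \<in> carrier_mat N N" and G': "G' \<in> carrier_mat N N" and H: "H \<in> carrier_mat N N"
    and inv: "(G - G') * H = 1\<^sub>m N" "H * (G - G') = 1\<^sub>m N" and "k \<le> N" "N \<le> M"
  shows "k + k \<le> mat_rk (code_word k M N G - code_word k M N G')"
proof -
  have D: "G - G' \<in> carrier_mat N N" using G' by (rule minus_carrier_mat)
  have "code_word k M N G - code_word k M N G' = four_block_mat (crop k N (G - G')) (0\<^sub>m k k)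
      (crop M k G * crop k N G - crop M k G' * crop k N G') (crop M k (G - G'))"
    unfolding code_word_def
    by (subst four_block_mat_diff[OF crop_carrier one_carrier_mat
          mult_carrier_mat[OF crop_carrier crop_carrier] crop_carrier
          crop_carrier one_carrier_mat mult_carrier_mat[OF crop_carrier crop_carrier] crop_carrier])
      (simp add: crop_diff[OF G G'] minus_r_inv_mat[OF one_carrier_mat])
  also have "k + k \<le> mat_rk \<dots>"
  proof (rule mat_rk_four_block_lower_ge[where k = k and n = N and m = M and l = k])
    show "crop k N (G - G') * crop N k H = 1\<^sub>m k"
      using crop_mult_crop[OF D H] inv(1) crop_one assms(6) by simp
    show "crop k M H * crop M k (G - G') = 1\<^sub>m k"
      using crop_mult_crop[OF H D] inv(2) crop_one assms(6,7) by simp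
  qed (simp_all add: minus_carrier_mat mult_carrier_mat[OF crop_carrier crop_carrier])
  finally show ?thesis .
qed

lemma exists_code_of_low_rank_words:
  assumes "1 \<le> k" "k \<le> N" "N \<le> M"
  shows "\<exists>C \<subseteq> carrier_mat (k + M) (N + k). card C = card (UNIV :: 'a::{finite,field} set) ^ N \<and>
           (\<forall>c\<in>C. mat_rk c \<le> k) \<and> (\<forall>c1\<in>C. \<forall>c2\<in>C. c1 \<noteq> c2 \<longrightarrow> k + k \<le> mat_rk (c1 - c2 :: 'a mat))"
proof -
  obtain S :: "'a mat set" where S: "S \<subseteq> carrier_mat N N" "card S = card (UNIV :: 'a set) ^ N"
    and inv: "\<And>A B. A \<in> S \<Longrightarrow> B \<in> S \<Longrightarrow> A \<noteq> B \<Longrightarrow>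
      \<exists>H \<in> carrier_mat N N. (A - B) * H = 1\<^sub>m N \<and> H * (A - B) = 1\<^sub>m N"
    using exists_spread_set[of N, where 'a='a] assms by auto
  have far: "k + k \<le> mat_rk (code_word k M N A - code_word k M N B)" if "A \<in> S" "B \<in> S" "A \<noteq> B" for A B
    using inv[OF that] mat_rk_code_word_diff_ge[of A N B] that S(1) assms by blast
  have "inj_on (code_word k M N) S"
  proof (rule inj_onI, rule ccontr)
    fix A B assume AB: "A \<in> S" "B \<in> S" "code_word k M N A = code_word k M N B" "A \<noteq> B"
    have "code_word k M N A - code_word k M N B = 0\<^sub>m (k + M) (N + k)"
      using AB(3) code_word_carrier[of k M N B] by simp
    thus False using far[OF AB(1,2,4)] assms(1) by simp
  qed
  hence "card (code_word k M N ` S) = card (UNIV :: 'a set) ^ N" using S(2) by (simp add: card_image)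
  thus ?thesis using far mat_rk_code_word_le code_word_carrier
    by (intro exI[of _ "code_word k M N ` S"]) auto
qed

theorem corollary2:
  fixes d n m :: nat
  assumes "1 \<le> d" "d \<le> n" "n \<le> m"
    and "odd d \<Longrightarrow> d \<le> n - 1"
  shows "\<exists>(C :: ('a::{finite,field}) mat set) r.
           C \<subseteq> carrier_mat m n \<and> min_rank_dist_ge C d \<and> r \<in> carrier_mat m n \<and>
           card (C \<inter> rank_ball m n ((d - 1) div 2 + 1) r) \<ge> card (UNIV :: 'a set) ^ (n - ((d - 1) div 2 + 1))"
proof -
  define k where "k = (d - 1) div 2 + 1"
  have k: "1 \<le> k" "d \<le> k + k" "k + k \<le> n"
    using assms unfolding k_def by presburger+
  have "k \<le> n - k" "n - k \<le> m - k" using k assms(3) by simp_all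
  from exists_code_of_low_rank_words[OF k(1) this, where 'a='a]
  obtain C :: "'a mat set" where C: "C \<subseteq> carrier_mat (k + (m - k)) (n - k + k)"
    "card C = card (UNIV :: 'a set) ^ (n - k)" "\<forall>c\<in>C. mat_rk c \<le> k"
    "\<forall>c1\<in>C. \<forall>c2\<in>C. c1 \<noteq> c2 \<longrightarrow> k + k \<le> mat_rk (c1 - c2)"
    by blast
  have dims: "k + (m - k) = m" "n - k + k = n" using k assms(3) by simp_all
  have "C \<subseteq> rank_ball m n k (0\<^sub>m m n)"
  proof
    fix c assume "c \<in> C"
    moreover have "c - 0\<^sub>m m n = c" using \<open>c \<in> C\<close> C(1) dims by (intro eq_matI) auto
    ultimately show "c \<in> rank_ball m n k (0\<^sub>m m n)" using C(1,3) dims by (auto simp: rank_ball_def)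
  qed
  hence "C \<inter> rank_ball m n k (0\<^sub>m m n) = C" by blast
  moreover have "min_rank_dist_ge C d" using C(4) k(2) by (force simp: min_rank_dist_ge_def)
  ultimately show ?thesis using C(1,2) dims unfolding k_def by (intro exI[of _ C] exI[of _ "0\<^sub>m m n"]) auto
qed

end
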